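(* Let $\mu>0$ and $\hbar>0$ be constants, and let $V:\mathbb{R}\to\mathbb{R}$ be a separable potential, i.e. there exist continuous real-valued functions $F$ and $G$ of one real variable such that $V\left(\frac{u+v}{2}\right)-V\left(\frac{u-v}{2}\right)=F(u)\,G(v)$ for all real $u,v$. Define, for real $u,u',v,v'$, $$\tilde{G}(v,v')=\int_{v'}^{v}G(v'')\,dv'',\qquad \tilde{F}(u,u')=\int_{u'}^{u}F(u'')\,du'',$$ and $$T_S(u,v)=\frac{u}{4}+\frac{\mu}{2\hbar^2}\int_{0}^{v}dv'\,G(v')\int_{0}^{u}du'\,F(u')\,\frac{u'}{4}\;{}_0F_1\!\left(;1;\frac{\mu}{2\hbar^2}\,\tilde{G}(v,v')\,\tilde{F}(u,u')\right).$$ Then $T_S$ satisfies the integral equation $$T_S(u,v)=\frac{u}{4}+\frac{\mu}{2\hbar^2}\int_{0}^{u}du'\int_{0}^{v}dv'\,F(u')\,G(v')\,T_S(u',v'),$$ and consequently the time kernel equation $$-\frac{2\hbar^2}{\mu}\frac{\partial^2 T_S(u,v)}{\partial u\,\partial v}+\left(V\left(\frac{u+v}{2}\right)-V\left(\frac{u-v}{2}\right)\right)T_S(u,v)=0$$ together with the boundary conditions $T_S(u,0)=u/4$ and $T_S(0,v)=0$.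
   Context: ${}_0F_1(;b;z)=\sum_{k=0}^{\infty}\frac{z^k}{(b)_k\,k!}$ denotes the confluent hypergeometric limit function, where $(b)_k$ is the Pochhammer symbol; in particular ${}_0F_1(;1;z)=\sum_{k\ge 0} z^k/(k!)^2$. The coordinates $u=q+q'$, $v=q-q'$ are the canonical coordinates in which the time kernel equation is written. *)

theory Defs
  imports "HOL-Analysis.Analysis"
begin

definition oint :: "real \<Rightarrow> real \<Rightarrow> (real \<Rightarrow> real) \<Rightarrow> real" where
  "oint a b f = (if a \<le> b then integral {a..b} f else - integral {b..a} f)"

definition hyp0F1_1 :: "real \<Rightarrow> real" where
  "hyp0F1_1 z = (\<Sum>k. z ^ k / (fact k) ^ 2)"

definition Gt :: "(real \<Rightarrow> real) \<Rightarrow> real \<Rightarrow> real \<Rightarrow> real" where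
  "Gt G v v' = oint v' v G"

definition Ft :: "(real \<Rightarrow> real) \<Rightarrow> real \<Rightarrow> real \<Rightarrow> real" where
  "Ft F u u' = oint u' u F"

definition TS :: "real \<Rightarrow> real \<Rightarrow> (real \<Rightarrow> real) \<Rightarrow> (real \<Rightarrow> real) \<Rightarrow> real \<Rightarrow> real \<Rightarrow> real" where
  "TS \<mu> hb F G u v =
     u / 4 + \<mu> / (2 * hb^2) *
       oint 0 v (\<lambda>v'. G v' *
         oint 0 u (\<lambda>u'. F u' * (u' / 4) *
           hyp0F1_1 (\<mu> / (2 * hb^2) * Gt G v v' * Ft F u u')))"

end

theory Submission
  imports Defs
begin

(* Write P_F, P_G for the primitives of F and G vanishing at 0, c = mu / (2 hb^2), and let
   W_0(u) = u/4, W_{j+1}(u) = int_0^u F W_j be the iterated integrals of F.  Cauchy's formula for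
   repeated integration, int_0^u F(s) s/4 (P_F(u) - P_F(s))^k ds = k! W_{k+1}(u), turns the 0F1
   series under the integral term by term into a series in W_j, and the outer integral over v is a
   substitution z = c (P_G v - P_G v').  The result is the exponential generating function
   T_S(u, v) = E(u, c P_G v) with E(u, z) = sum_j z^j/j! W_j(u).  Since W_{j+1} is the integral of
   F W_j, the z-derivative of E is int_0^u F E(., z); integrating this once in u and once in v gives
   the integral equation, differentiating it gives the kernel equation.  Every exchange of a sum
   with an integral or derivative is justified by majorants |W_j| <= A K^j on bounded intervals. *)

section \<open>Oriented integrals and primitives\<close>

lemma oint_fundamental_theorem:
  assumes "\<And>x. (H has_real_derivative h x) (at x)"
  shows "oint a b h = H b - H a"
proof -
  have "(h has_integral (H y - H x)) {x..y}" if "x \<le> y" for x y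
    by (rule fundamental_theorem_of_calculus[OF that])
       (auto simp: has_real_derivative_iff_has_vector_derivative[symmetric]
             intro: has_field_derivative_at_within assms)
  from this[of a b] this[of b a] show ?thesis
    by (cases "a \<le> b") (simp_all add: oint_def integral_unique)
qed

lemma oint_substitution:
  assumes "\<And>x. (\<Phi> has_real_derivative \<phi> x) (at x)"
    and "\<And>t. (g has_real_derivative g' t) (at t)"
  shows "oint a b (\<lambda>t. g' t * \<phi> (g t)) = \<Phi> (g b) - \<Phi> (g a)"
  by (rule oint_fundamental_theorem)
     (use DERIV_chain2[OF assms(1) assms(2)] in \<open>simp add: mult.commute\<close>)

lemma oint_cmult: "oint a b (\<lambda>x. k * h x) = k * oint a b h"
  by (simp add: oint_def)

lemma oint_same [simp]: "oint a a h = 0"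
  by (simp add: oint_def)

lemma integrable_on_continuous_UNIV:
  "continuous_on UNIV (h :: real \<Rightarrow> real) \<Longrightarrow> h integrable_on {a..b}"
  by (meson continuous_on_subset integrable_continuous_interval subset_UNIV)

lemma oint_sum:
  assumes "finite A" "\<And>i. i \<in> A \<Longrightarrow> continuous_on UNIV (h i)"
  shows "oint a b (\<lambda>x. \<Sum>i\<in>A. h i x) = (\<Sum>i\<in>A. oint a b (h i))"
  using assms
  by (simp add: oint_def Henstock_Kurzweil_Integration.integral_sum integrable_on_continuous_UNIV sum_negf)

lemma oint_bound:
  assumes "continuous_on UNIV h" and "\<And>x. x \<in> {min a b..max a b} \<Longrightarrow> \<bar>h x\<bar> \<le> B"
  shows "\<bar>oint a b h\<bar> \<le> \<bar>b - a\<bar> * B"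
proof -
  have "norm (integral {x..y} h) \<le> B * (y - x)" if "x \<le> y" "{x..y} = {min a b..max a b}" for x y
    by (rule integral_bound) (use that assms in \<open>auto intro: continuous_on_subset\<close>)
  then show ?thesis by (cases "a \<le> b") (auto simp: oint_def mult.commute)
qed

definition primitive :: "(real \<Rightarrow> real) \<Rightarrow> real \<Rightarrow> real" where
  "primitive h x = oint 0 x h"

lemma primitive_0 [simp]: "primitive h 0 = 0"
  by (simp add: primitive_def)

lemma has_real_derivative_primitive:
  assumes h: "continuous_on UNIV h"
  shows "(primitive h has_real_derivative h x) (at x)"
proof -
  define a b where "a = - (\<bar>x\<bar> + 1)" and "b = \<bar>x\<bar> + 1"
  have x: "x \<in> {a<..<b}" and a0: "a \<le> 0" "0 \<le> b" by (auto simp: a_def b_def)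
  have "((\<lambda>y. integral {a..y} h) has_real_derivative h x) (at x within {a..b})"
    by (rule integral_has_real_derivative) (use x in \<open>auto intro: continuous_on_subset[OF h]\<close>)
  moreover have "at x within {a..b} = at x"
    using x by (intro at_within_interior) auto
  ultimately have "((\<lambda>y. integral {a..y} h - integral {a..0} h) has_real_derivative h x) (at x)"
    by (auto intro!: derivative_eq_intros)
  then show ?thesis
  proof (rule has_field_derivative_transform_within_open[OF _ _ x])
    fix y assume y: "y \<in> {a<..<b}"
    have "integral {a..min 0 y} h + integral {min 0 y..max 0 y} h = integral {a..max 0 y} h"
      by (rule Henstock_Kurzweil_Integration.integral_combine)
         (use y a0 in \<open>auto intro: integrable_on_continuous_UNIV h\<close>)
    then show "integral {a..y} h - integral {a..0} h = primitive h y"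
      by (cases "0 \<le> y") (auto simp: primitive_def oint_def min_def max_def)
  qed auto
qed

lemma continuous_on_primitive:
  "continuous_on UNIV h \<Longrightarrow> continuous_on UNIV (primitive h)"
  by (meson DERIV_continuous continuous_at_imp_continuous_on has_real_derivative_primitive)

lemma oint_eq_primitive_diff:
  "continuous_on UNIV h \<Longrightarrow> oint a b h = primitive h b - primitive h a"
  by (rule oint_fundamental_theorem) (rule has_real_derivative_primitive)

lemma continuous_bounded_on_interval:
  fixes h :: "real \<Rightarrow> real"
  assumes "continuous_on UNIV h"
  obtains B where "\<And>x. \<bar>x\<bar> \<le> r \<Longrightarrow> \<bar>h x\<bar> \<le> B"
proof -
  have "compact (h ` {-r..r})"
    by (rule compact_continuous_image) (auto intro: continuous_on_subset[OF assms])
  then obtain B where "\<forall>y\<in>h ` {-r..r}. norm y \<le> B"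
    using compact_imp_bounded bounded_iff by metis
  then show ?thesis using that by force
qed

section \<open>Entire power series\<close>

lemma summable_abs_powser:
  fixes \<alpha> :: "nat \<Rightarrow> real"
  assumes "\<And>x. summable (\<lambda>n. \<alpha> n * x ^ n)"
  shows "summable (\<lambda>n. \<bar>\<alpha> n\<bar> * \<bar>x\<bar> ^ n)"
  using powser_insidea[OF assms[of "\<bar>x\<bar> + 1"], of x] by (simp add: abs_mult power_abs)

lemma summable_exp_powser: "summable (\<lambda>n. z ^ n / fact n * x ^ n :: real)"
  using summable_exp[of "z * x"] by (simp add: power_mult_distrib field_simps)

lemma summable_powser_shift:
  fixes a :: "nat \<Rightarrow> real"
  assumes "\<And>x. summable (\<lambda>n. a n * x ^ n)"
  shows "summable (\<lambda>n. a (Suc n) * x ^ n)"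
proof (cases "x = 0")
  case False
  have "summable (\<lambda>n. a (Suc n) * x ^ Suc n)"
    using assms[of x] summable_Suc_iff[of "\<lambda>n. a n * x ^ n"] by simp
  then have "summable (\<lambda>n. a (Suc n) * x ^ Suc n / x)"
    by (rule summable_divide)
  moreover have "a (Suc n) * x ^ Suc n / x = a (Suc n) * x ^ n" for n
    using False by simp
  ultimately show ?thesis by simp
qed simp

lemma summable_hyp0F1_1_powser: "summable (\<lambda>k. z ^ k / (fact k)\<^sup>2 * x ^ k :: real)"
proof (rule summable_comparison_test'[where N = 0, OF summable_exp_powser[of "\<bar>z\<bar>" "\<bar>x\<bar>"]])
  fix k :: nat
  have "fact k \<le> (fact k :: real)\<^sup>2"
    using fact_ge_1[of k, where 'a = real] by (simp add: power2_eq_square)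
  then have "\<bar>z\<bar> ^ k * \<bar>x\<bar> ^ k / (fact k)\<^sup>2 \<le> \<bar>z\<bar> ^ k * \<bar>x\<bar> ^ k / fact k"
    by (intro divide_left_mono) auto
  then show "norm (z ^ k / (fact k)\<^sup>2 * x ^ k) \<le> \<bar>z\<bar> ^ k / fact k * \<bar>x\<bar> ^ k"
    by (simp add: abs_mult power_abs)
qed

lemma powser_antiderivative:
  fixes c :: "nat \<Rightarrow> real"
  assumes c: "\<And>x. summable (\<lambda>n. c n * x ^ n)"
  shows "((\<lambda>x. \<Sum>n. c n / Suc n * x ^ Suc n) has_real_derivative (\<Sum>n. c n * x ^ n)) (at x)"
proof -
  define b where "b n = (case n of 0 \<Rightarrow> 0 | Suc m \<Rightarrow> c m / Suc m)" for n
  have diffs_b: "diffs b = c"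
    by (auto simp: diffs_def b_def)
  have summable_b: "summable (\<lambda>n. b n * y ^ n)" for y
  proof -
    have majorant: "summable (\<lambda>n. \<bar>c n\<bar> * \<bar>y\<bar> ^ n * \<bar>y\<bar>)"
      by (intro summable_mult2 summable_abs_powser c)
    have "\<bar>b (Suc n) * y ^ Suc n\<bar> \<le> \<bar>c n\<bar> * \<bar>y\<bar> ^ n * \<bar>y\<bar>" for n
      by (auto simp: b_def abs_mult power_abs divide_le_eq mult_ac mult_le_cancel_right1 intro!: mult_left_mono)
    then have "summable (\<lambda>n. b (Suc n) * y ^ Suc n)"
      by (intro summable_comparison_test'[where N = 0, OF majorant]) simp
    then show ?thesis by (rule summable_Suc_iff[THEN iffD1])
  qed
  have "(\<Sum>n. c n / Suc n * y ^ Suc n) = (\<Sum>n. b n * y ^ n)" for y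
    using suminf_split_head[OF summable_b[of y]] by (simp add: b_def)
  then show ?thesis
    using termdiffs_strong_converges_everywhere[of b x, OF summable_b] by (simp add: diffs_b)
qed

section \<open>Series with locally summable majorants\<close>

definition locally_dominated :: "(nat \<Rightarrow> real \<Rightarrow> real) \<Rightarrow> bool" where
  "locally_dominated h \<longleftrightarrow>
     (\<forall>r. \<exists>M. summable M \<and> (\<forall>n x. \<bar>x\<bar> \<le> r \<longrightarrow> \<bar>h n x\<bar> \<le> M n))"

lemma locally_dominatedE:
  assumes "locally_dominated h"
  obtains M where "summable M" "\<And>n x. \<bar>x\<bar> \<le> r \<Longrightarrow> \<bar>h n x\<bar> \<le> M n"
  using assms unfolding locally_dominated_def by blast

lemma summable_locally_dominated:
  "locally_dominated h \<Longrightarrow> summable (\<lambda>n. h n x)"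
  by (erule locally_dominatedE[where r = "\<bar>x\<bar>"]) (auto intro: summable_comparison_test'[where N = 0])

lemma locally_dominated_mult_left:
  assumes "locally_dominated h" and "continuous_on UNIV f"
  shows "locally_dominated (\<lambda>n x. f x * h n x)"
  unfolding locally_dominated_def
proof
  fix r
  obtain M where M: "summable M" "\<And>n x. \<bar>x\<bar> \<le> r \<Longrightarrow> \<bar>h n x\<bar> \<le> M n"
    using assms(1) by (rule locally_dominatedE[where r = r]) blast
  obtain B where B: "\<And>x. \<bar>x\<bar> \<le> r \<Longrightarrow> \<bar>f x\<bar> \<le> B"
    using assms(2) by (rule continuous_bounded_on_interval[where r = r]) blast
  have "\<bar>f x * h n x\<bar> \<le> B * M n" if "\<bar>x\<bar> \<le> r" for n x
    unfolding abs_mult by (rule mult_mono) (use that B M in \<open>auto intro: order_trans[OF abs_ge_zero]\<close>)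
  with M(1) show "\<exists>M. summable M \<and> (\<forall>n x. \<bar>x\<bar> \<le> r \<longrightarrow> \<bar>f x * h n x\<bar> \<le> M n)"
    by (blast intro: summable_mult)
qed

lemma continuous_on_suminf_locally_dominated:
  assumes "\<And>n. continuous_on UNIV (h n)" and "locally_dominated h"
  shows "continuous_on UNIV (\<lambda>x. \<Sum>n. h n x)"
proof -
  have "continuous_on {-r<..<r} (\<lambda>x. \<Sum>n. h n x)" for r
  proof -
    obtain M where M: "summable M" "\<And>n x. \<bar>x\<bar> \<le> r \<Longrightarrow> \<bar>h n x\<bar> \<le> M n"
      using assms(2) by (rule locally_dominatedE[where r = r]) blast
    have "uniform_limit {-r<..<r} (\<lambda>n x. \<Sum>i<n. h i x) (\<lambda>x. \<Sum>i. h i x) sequentially"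
      by (rule Weierstrass_m_test[OF _ M(1)]) (auto intro: M(2))
    then show ?thesis
      by (rule uniform_limit_theorem[rotated])
         (auto intro!: always_eventually continuous_intros continuous_on_subset[OF assms(1)])
  qed
  moreover have "x \<in> {-(\<bar>x\<bar> + 1)<..<\<bar>x\<bar> + 1}" for x :: real
    by auto
  ultimately have "isCont (\<lambda>x. \<Sum>n. h n x) x" for x
    using continuous_on_eq_continuous_at[OF open_greaterThanLessThan] by blast
  then show ?thesis by (simp add: continuous_at_imp_continuous_on)
qed

lemma oint_suminf_locally_dominated:
  assumes cont: "\<And>n. continuous_on UNIV (h n)" and "locally_dominated h"
  shows "oint a b (\<lambda>x. \<Sum>n. h n x) = (\<Sum>n. oint a b (h n))"
proof -
  define lo hi where "lo = min a b" and "hi = max a b"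
  obtain M where M: "summable M" "\<And>n x. \<bar>x\<bar> \<le> max \<bar>a\<bar> \<bar>b\<bar> \<Longrightarrow> \<bar>h n x\<bar> \<le> M n"
    using assms(2) by (rule locally_dominatedE[where r = "max \<bar>a\<bar> \<bar>b\<bar>"]) blast
  have "uniform_limit {lo..hi} (\<lambda>n x. \<Sum>i<n. h i x) (\<lambda>x. \<Sum>i. h i x) sequentially"
    by (rule Weierstrass_m_test[OF _ M(1)]) (auto simp: lo_def hi_def intro!: M(2))
  then obtain I J where I: "\<And>n. ((\<lambda>x. \<Sum>i<n. h i x) has_integral I n) {lo..hi}"
    and J: "((\<lambda>x. \<Sum>i. h i x) has_integral J) {lo..hi}" and IJ: "I \<longlonglongrightarrow> J"
    by (rule uniform_limit_integral) (auto intro!: continuous_intros continuous_on_subset[OF cont])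
  have "I = (\<lambda>n. \<Sum>i<n. integral {lo..hi} (h i))"
  proof
    fix n
    have "I n = integral {lo..hi} (\<lambda>x. \<Sum>i<n. h i x)"
      using I[of n] by (simp add: integral_unique)
    also have "\<dots> = (\<Sum>i<n. integral {lo..hi} (h i))"
      by (rule Henstock_Kurzweil_Integration.integral_sum) (auto intro: integrable_on_continuous_UNIV cont)
    finally show "I n = (\<Sum>i<n. integral {lo..hi} (h i))" .
  qed
  with IJ have "(\<lambda>i. integral {lo..hi} (h i)) sums J"
    unfolding sums_def by simp
  then have "(\<lambda>i. oint a b (h i)) sums oint a b (\<lambda>x. \<Sum>i. h i x)"
    using J by (cases "a \<le> b") (auto simp: oint_def lo_def hi_def integral_unique intro: sums_minus)
  then show ?thesis by (simp add: sums_iff)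
qed

section \<open>Iterated integrals\<close>

primrec iter_int :: "(real \<Rightarrow> real) \<Rightarrow> (real \<Rightarrow> real) \<Rightarrow> nat \<Rightarrow> real \<Rightarrow> real" where
  "iter_int F w 0 = w"
| "iter_int F w (Suc j) = primitive (\<lambda>s. F s * iter_int F w j s)"

declare iter_int.simps(2) [simp del]

lemma continuous_on_iter_int:
  "continuous_on UNIV F \<Longrightarrow> continuous_on UNIV w \<Longrightarrow> continuous_on UNIV (iter_int F w j)"
  by (induction j) (auto simp: iter_int.simps(2) intro!: continuous_on_primitive continuous_intros)

lemma iter_int_Suc_shift: "iter_int F w (Suc j) = iter_int F (iter_int F w 1) j"
  by (induction j) (simp_all add: iter_int.simps(2))

lemma iter_int_bound:
  assumes F: "continuous_on UNIV F" and w: "continuous_on UNIV w"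
    and B: "\<And>s. \<bar>s\<bar> \<le> r \<Longrightarrow> \<bar>F s\<bar> \<le> B" and A: "\<And>s. \<bar>s\<bar> \<le> r \<Longrightarrow> \<bar>w s\<bar> \<le> A"
    and "\<bar>s\<bar> \<le> r"
  shows "\<bar>iter_int F w j s\<bar> \<le> A * (B * r) ^ j"
  using \<open>\<bar>s\<bar> \<le> r\<close>
proof (induction j arbitrary: s)
  case 0
  then show ?case by (simp add: A)
next
  case (Suc j)
  have "0 \<le> r" using Suc.prems by linarith
  then have "0 \<le> B" "0 \<le> A" using B[of 0] A[of 0] by auto
  have "\<bar>oint 0 s (\<lambda>t. F t * iter_int F w j t)\<bar> \<le> \<bar>s - 0\<bar> * (B * (A * (B * r) ^ j))"
  proof (rule oint_bound)
    show "continuous_on UNIV (\<lambda>t. F t * iter_int F w j t)"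
      by (intro continuous_intros F continuous_on_iter_int w)
    fix t assume "t \<in> {min 0 s..max 0 s}"
    then have "\<bar>t\<bar> \<le> r" using Suc.prems by auto
    then show "\<bar>F t * iter_int F w j t\<bar> \<le> B * (A * (B * r) ^ j)"
      using \<open>0 \<le> B\<close> unfolding abs_mult by (intro mult_mono B Suc.IH) auto
  qed
  also have "\<dots> \<le> r * (B * (A * (B * r) ^ j))"
    using Suc.prems \<open>0 \<le> A\<close> \<open>0 \<le> B\<close> \<open>0 \<le> r\<close> by (intro mult_right_mono) auto
  finally show ?case by (simp add: iter_int.simps(2) primitive_def mult_ac)
qed

lemma locally_dominated_iter_int:
  assumes F: "continuous_on UNIV F" and w: "continuous_on UNIV w"
    and \<alpha>: "\<And>x. summable (\<lambda>n. \<alpha> n * x ^ n)"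
  shows "locally_dominated (\<lambda>j s. \<alpha> j * iter_int F w j s)"
  unfolding locally_dominated_def
proof
  fix r
  obtain B where B: "\<And>s. \<bar>s\<bar> \<le> \<bar>r\<bar> \<Longrightarrow> \<bar>F s\<bar> \<le> B"
    using F by (rule continuous_bounded_on_interval[where r = "\<bar>r\<bar>"]) blast
  obtain A where A: "\<And>s. \<bar>s\<bar> \<le> \<bar>r\<bar> \<Longrightarrow> \<bar>w s\<bar> \<le> A"
    using w by (rule continuous_bounded_on_interval[where r = "\<bar>r\<bar>"]) blast
  have "0 \<le> A" "0 \<le> B" using A[of 0] B[of 0] by auto
  have "\<bar>\<alpha> j * iter_int F w j s\<bar> \<le> A * (\<bar>\<alpha> j\<bar> * \<bar>B * \<bar>r\<bar>\<bar> ^ j)" if "\<bar>s\<bar> \<le> r" for j s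
  proof -
    have "\<bar>iter_int F w j s\<bar> \<le> A * (B * \<bar>r\<bar>) ^ j"
      using that by (intro iter_int_bound[OF F w B A]) auto
    then have "\<bar>\<alpha> j\<bar> * \<bar>iter_int F w j s\<bar> \<le> \<bar>\<alpha> j\<bar> * (A * (B * \<bar>r\<bar>) ^ j)"
      by (rule mult_left_mono) simp
    then show ?thesis
      using \<open>0 \<le> B\<close> by (simp add: abs_mult mult_ac)
  qed
  moreover have "summable (\<lambda>j. A * (\<bar>\<alpha> j\<bar> * \<bar>B * \<bar>r\<bar>\<bar> ^ j))"
    by (intro summable_mult summable_abs_powser \<alpha>)
  ultimately show "\<exists>M. summable M \<and> (\<forall>j s. \<bar>s\<bar> \<le> r \<longrightarrow> \<bar>\<alpha> j * iter_int F w j s\<bar> \<le> M j)"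
    by blast
qed

lemma oint_mult_power_diff_binomial:
  assumes "continuous_on UNIV g" "continuous_on UNIV p"
  shows "oint a b (\<lambda>s. g s * (c - p s) ^ m)
           = (\<Sum>j\<le>m. of_nat (m choose j) * c ^ (m - j) * oint a b (\<lambda>s. g s * (- p s) ^ j))"
proof -
  have "g s * (c - p s) ^ m = (\<Sum>j\<le>m. of_nat (m choose j) * c ^ (m - j) * (g s * (- p s) ^ j))" for s
    using binomial_ring[of "- p s" c m] by (simp add: sum_distrib_left mult_ac)
  then have "oint a b (\<lambda>s. g s * (c - p s) ^ m)
           = oint a b (\<lambda>s. \<Sum>j\<le>m. of_nat (m choose j) * c ^ (m - j) * (g s * (- p s) ^ j))"
    by presburger
  also have "\<dots> = (\<Sum>j\<le>m. oint a b (\<lambda>s. of_nat (m choose j) * c ^ (m - j) * (g s * (- p s) ^ j)))"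
    using assms by (intro oint_sum) (auto intro!: continuous_intros)
  finally show ?thesis by (simp only: oint_cmult)
qed

lemma sum_binomial_power_derivative:
  fixes x :: real
  shows "(\<Sum>j\<le>Suc k. of_nat (Suc k choose j) * (of_nat (Suc k - j) * x ^ (Suc k - j - 1)) * b j)
           = of_nat (Suc k) * (\<Sum>j\<le>k. of_nat (k choose j) * x ^ (k - j) * b j)"
proof -
  have summand: "of_nat (Suc k choose j) * (of_nat (Suc k - j) * x ^ (Suc k - j - 1)) * b j
          = of_nat (Suc k) * (of_nat (k choose j) * x ^ (k - j) * b j)" if "j \<le> k" for j
  proof -
    have "real ((Suc k - j) * (Suc k choose j)) = real (Suc k * (k choose j))"
      using binomial_absorb_comp[of "Suc k" j] by simp
    moreover have "Suc k - j - 1 = k - j" by simp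
    ultimately show ?thesis by (simp only: of_nat_mult) (simp add: mult_ac)
  qed
  have "(\<Sum>j\<le>Suc k. of_nat (Suc k choose j) * (of_nat (Suc k - j) * x ^ (Suc k - j - 1)) * b j)
          = (\<Sum>j\<le>k. of_nat (Suc k choose j) * (of_nat (Suc k - j) * x ^ (Suc k - j - 1)) * b j)"
    by (simp add: sum.atMost_Suc)
  also have "\<dots> = (\<Sum>j\<le>k. of_nat (Suc k) * (of_nat (k choose j) * x ^ (k - j) * b j))"
    by (rule sum.cong) (simp_all only: atMost_iff summand)
  finally show ?thesis by (simp only: sum_distrib_left)
qed

lemma has_real_derivative_oint_power_primitive_diff:
  assumes g: "continuous_on UNIV g" and F: "continuous_on UNIV F"
  shows "((\<lambda>x. oint 0 x (\<lambda>s. g s * (primitive F x - primitive F s) ^ Suc k)) has_real_derivative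
           of_nat (Suc k) * F u * oint 0 u (\<lambda>s. g s * (primitive F u - primitive F s) ^ k)) (at u)"
proof -
  \<comment> \<open>The binomial expansion separates the dependence on the upper limit from the integrand.\<close>
  let ?P = "primitive F"
  define B where "B j = primitive (\<lambda>s. g s * (- ?P s) ^ j)" for j
  have B_deriv: "(B j has_real_derivative g x * (- ?P x) ^ j) (at x)" for j x
    unfolding B_def using g continuous_on_primitive[OF F]
    by (intro has_real_derivative_primitive) (auto intro!: continuous_intros)
  have expand: "oint 0 x (\<lambda>s. g s * (?P x - ?P s) ^ m)
                  = (\<Sum>j\<le>m. of_nat (m choose j) * ?P x ^ (m - j) * B j x)" for m x
    using oint_mult_power_diff_binomial[OF g continuous_on_primitive[OF F]]
    by (simp add: B_def primitive_def)
  let ?A = "\<lambda>j. of_nat (Suc k choose j) * (of_nat (Suc k - j) * ?P u ^ (Suc k - j - 1)) * (F u * B j u)"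
  let ?C = "\<lambda>j. of_nat (Suc k choose j) * ?P u ^ (Suc k - j) * (g u * (- ?P u) ^ j)"
  have "((\<lambda>x. \<Sum>j\<le>Suc k. of_nat (Suc k choose j) * ?P x ^ (Suc k - j) * B j x)
          has_real_derivative (\<Sum>j\<le>Suc k. ?A j + ?C j)) (at u)"
    by (intro DERIV_sum DERIV_cong[OF DERIV_mult[OF DERIV_cmult[OF
          DERIV_power[OF has_real_derivative_primitive[OF F]]] B_deriv]])
       (simp add: algebra_simps)
  \<comment> \<open>The terms from differentiating the integrals recombine to \<open>g u * (P u - P u) ^ Suc k\<close>.\<close>
  moreover have "(\<Sum>j\<le>Suc k. ?C j) = 0"
  proof -
    have "(\<Sum>j\<le>Suc k. ?C j)
            = g u * (\<Sum>j\<le>Suc k. of_nat (Suc k choose j) * (- ?P u) ^ j * ?P u ^ (Suc k - j))"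
      unfolding sum_distrib_left by (rule sum.cong) (simp_all add: mult_ac)
    also have "\<dots> = g u * (- ?P u + ?P u) ^ Suc k"
      by (simp only: binomial_ring)
    finally show ?thesis by simp
  qed
  ultimately have "((\<lambda>x. \<Sum>j\<le>Suc k. of_nat (Suc k choose j) * ?P x ^ (Suc k - j) * B j x)
          has_real_derivative (\<Sum>j\<le>Suc k. ?A j)) (at u)"
    by (simp add: sum.distrib)
  then show ?thesis
    by (simp only: expand sum_binomial_power_derivative) (simp add: sum_distrib_left mult_ac)
qed

text \<open>Cauchy's formula for repeated integration, with respect to the measure \<open>dP\<^sub>F\<close>.\<close>

theorem fact_mult_iter_int_Suc:
  assumes F: "continuous_on UNIV F" and w: "continuous_on UNIV w"
  shows "fact k * iter_int F w (Suc k) u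
           = oint 0 u (\<lambda>s. F s * w s * (primitive F u - primitive F s) ^ k)"
proof (induction k arbitrary: u)
  case 0
  then show ?case by (simp add: iter_int.simps(2) primitive_def)
next
  case (Suc k)
  let ?Q = "\<lambda>m x. oint 0 x (\<lambda>s. F s * w s * (primitive F x - primitive F s) ^ m)"
  have "fact (Suc k) * iter_int F w (Suc (Suc k)) u
          = oint 0 u (\<lambda>s. of_nat (Suc k) * F s * (fact k * iter_int F w (Suc k) s))"
    by (simp add: iter_int.simps(2) primitive_def flip: oint_cmult) (simp add: algebra_simps)
  also have "\<dots> = oint 0 u (\<lambda>s. of_nat (Suc k) * F s
                     * oint 0 s (\<lambda>t. F t * w t * (primitive F s - primitive F t) ^ k))"
    by (simp only: Suc.IH)
  also have "\<dots> = ?Q (Suc k) u - ?Q (Suc k) 0"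
    by (rule oint_fundamental_theorem, rule has_real_derivative_oint_power_primitive_diff)
       (use F w in \<open>auto intro: continuous_intros\<close>)
  finally show ?case by simp
qed

lemma summable_iter_int_series:
  assumes "continuous_on UNIV F" "continuous_on UNIV w" "\<And>x. summable (\<lambda>n. \<alpha> n * x ^ n)"
  shows "summable (\<lambda>j. \<alpha> j * iter_int F w j u)"
  by (rule summable_locally_dominated[OF locally_dominated_iter_int[OF assms]])

lemma continuous_on_iter_int_series:
  assumes "continuous_on UNIV F" "continuous_on UNIV w" "\<And>x. summable (\<lambda>n. \<alpha> n * x ^ n)"
  shows "continuous_on UNIV (\<lambda>s. \<Sum>j. \<alpha> j * iter_int F w j s)"
  using assms
  by (intro continuous_on_suminf_locally_dominated[OF _ locally_dominated_iter_int[OF assms]])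
     (auto intro!: continuous_intros continuous_on_iter_int)

lemma oint_iter_int_series:
  assumes F: "continuous_on UNIV F" and w: "continuous_on UNIV w"
    and \<alpha>: "\<And>x. summable (\<lambda>n. \<alpha> n * x ^ n)"
  shows "oint 0 u (\<lambda>s. F s * (\<Sum>j. \<alpha> j * iter_int F w j s)) = (\<Sum>j. \<alpha> j * iter_int F w (Suc j) u)"
proof -
  have "oint 0 u (\<lambda>s. F s * (\<Sum>j. \<alpha> j * iter_int F w j s))
          = oint 0 u (\<lambda>s. \<Sum>j. F s * (\<alpha> j * iter_int F w j s))"
    by (simp only: suminf_mult[OF summable_iter_int_series[OF F w \<alpha>]])
  also have "\<dots> = (\<Sum>j. oint 0 u (\<lambda>s. F s * (\<alpha> j * iter_int F w j s)))"
    using F w \<alpha>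
    by (intro oint_suminf_locally_dominated locally_dominated_mult_left locally_dominated_iter_int)
       (auto intro!: continuous_intros continuous_on_iter_int)
  also have "\<dots> = (\<Sum>j. \<alpha> j * iter_int F w (Suc j) u)"
    by (simp add: iter_int.simps(2) primitive_def mult.left_commute flip: oint_cmult)
  finally show ?thesis .
qed

lemma locally_dominated_powser_comp:
  assumes p: "continuous_on UNIV p" and \<beta>: "\<And>x. summable (\<lambda>n. \<beta> n * x ^ n)"
  shows "locally_dominated (\<lambda>k s. \<beta> k * (c - p s) ^ k)"
  unfolding locally_dominated_def
proof
  fix r
  obtain B where B: "\<And>s. \<bar>s\<bar> \<le> r \<Longrightarrow> \<bar>p s\<bar> \<le> B"
    using p by (rule continuous_bounded_on_interval[where r = r]) blast
  have "\<bar>\<beta> k * (c - p s) ^ k\<bar> \<le> \<bar>\<beta> k\<bar> * \<bar>\<bar>c\<bar> + B\<bar> ^ k" if "\<bar>s\<bar> \<le> r" for k s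
    unfolding abs_mult power_abs
    using B[OF that] by (intro mult_left_mono power_mono) auto
  moreover have "summable (\<lambda>k. \<bar>\<beta> k\<bar> * \<bar>\<bar>c\<bar> + B\<bar> ^ k)"
    by (rule summable_abs_powser[OF \<beta>])
  ultimately show "\<exists>M. summable M \<and> (\<forall>k s. \<bar>s\<bar> \<le> r \<longrightarrow> \<bar>\<beta> k * (c - p s) ^ k\<bar> \<le> M k)"
    by blast
qed

lemma oint_powser_primitive_diff:
  assumes F: "continuous_on UNIV F" and w: "continuous_on UNIV w"
    and \<beta>: "\<And>x. summable (\<lambda>n. \<beta> n * x ^ n)"
  shows "oint 0 u (\<lambda>s. F s * w s * (\<Sum>k. \<beta> k * (primitive F u - primitive F s) ^ k))
           = (\<Sum>k. \<beta> k * fact k * iter_int F w (Suc k) u)"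
proof -
  have dominated: "locally_dominated (\<lambda>k s. \<beta> k * (primitive F u - primitive F s) ^ k)"
    by (rule locally_dominated_powser_comp[OF continuous_on_primitive[OF F] \<beta>])
  have "oint 0 u (\<lambda>s. F s * w s * (\<Sum>k. \<beta> k * (primitive F u - primitive F s) ^ k))
          = oint 0 u (\<lambda>s. \<Sum>k. F s * w s * (\<beta> k * (primitive F u - primitive F s) ^ k))"
    by (simp only: suminf_mult[OF summable_locally_dominated[OF dominated]])
  also have "\<dots> = (\<Sum>k. oint 0 u (\<lambda>s. F s * w s * (\<beta> k * (primitive F u - primitive F s) ^ k)))"
    using F w continuous_on_primitive[OF F]
    by (intro oint_suminf_locally_dominated locally_dominated_mult_left dominated)
       (auto intro!: continuous_intros)
  also have "\<dots> = (\<Sum>k. \<beta> k * fact k * iter_int F w (Suc k) u)"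
    by (simp add: fact_mult_iter_int_Suc[OF F w] mult.assoc mult.left_commute[of "\<beta> _"]
             flip: oint_cmult)
  finally show ?thesis .
qed

section \<open>The exponential generating function of the iterated integrals\<close>

definition iter_int_egf :: "(real \<Rightarrow> real) \<Rightarrow> (real \<Rightarrow> real) \<Rightarrow> real \<Rightarrow> real \<Rightarrow> real" where
  "iter_int_egf F w z u = (\<Sum>j. z ^ j / fact j * iter_int F w j u)"

lemma iter_int_egf_0 [simp]: "iter_int_egf F w 0 u = w u"
proof -
  have "(\<lambda>j. 0 ^ j / fact j * iter_int F w j u) = (\<lambda>j. if j = 0 then w u else 0)"
    by (auto simp: fun_eq_iff)
  then show ?thesis
    using sums_single[of 0 "\<lambda>_. w u"] by (simp add: iter_int_egf_def sums_iff)
qed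

lemma summable_iter_int_egf:
  "continuous_on UNIV F \<Longrightarrow> continuous_on UNIV w \<Longrightarrow> summable (\<lambda>j. z ^ j / fact j * iter_int F w j u)"
  by (intro summable_iter_int_series summable_exp_powser)

lemma iter_int_egf_eq_head_tail:
  assumes "continuous_on UNIV F" "continuous_on UNIV w"
  shows "iter_int_egf F w z u = w u + (\<Sum>j. z ^ Suc j / fact (Suc j) * iter_int F w (Suc j) u)"
  using suminf_split_head[OF summable_iter_int_egf[OF assms]] by (simp add: iter_int_egf_def)

lemma continuous_on_iter_int_egf:
  "continuous_on UNIV F \<Longrightarrow> continuous_on UNIV w \<Longrightarrow> continuous_on UNIV (iter_int_egf F w z)"
  unfolding iter_int_egf_def[abs_def] by (intro continuous_on_iter_int_series summable_exp_powser)

lemma oint_iter_int_egf: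
  "continuous_on UNIV F \<Longrightarrow> continuous_on UNIV w \<Longrightarrow>
     oint 0 u (\<lambda>s. F s * iter_int_egf F w z s) = (\<Sum>j. z ^ j / fact j * iter_int F w (Suc j) u)"
  unfolding iter_int_egf_def by (intro oint_iter_int_series summable_exp_powser)

lemma iter_int_egf_has_real_derivative:
  assumes F: "continuous_on UNIV F" and w: "continuous_on UNIV w"
  shows "((\<lambda>z. iter_int_egf F w z u) has_real_derivative oint 0 u (\<lambda>s. F s * iter_int_egf F w z s)) (at z)"
proof -
  \<comment> \<open>Both sides are the power series in \<open>z\<close> with coefficients \<open>iter_int F w (Suc j) u / fact j\<close>.\<close>
  define c where "c j = iter_int F w (Suc j) u / fact j" for j
  have c: "summable (\<lambda>j. c j * x ^ j)" for x
  proof -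
    have "c j * x ^ j = x ^ j / fact j * iter_int F (iter_int F w 1) j u" for j
      unfolding c_def iter_int_Suc_shift[of F w j] by simp
    moreover have "summable (\<lambda>j. x ^ j / fact j * iter_int F (iter_int F w 1) j u)"
      using F w by (intro summable_iter_int_egf continuous_on_iter_int)
    ultimately show ?thesis by simp
  qed
  have "c j / Suc j * y ^ Suc j = y ^ Suc j / fact (Suc j) * iter_int F w (Suc j) u" for j y
    by (simp add: c_def mult_ac)
  then have "iter_int_egf F w y u = w u + (\<Sum>j. c j / Suc j * y ^ Suc j)" for y
    by (simp only: iter_int_egf_eq_head_tail[OF F w])
  moreover have "oint 0 u (\<lambda>s. F s * iter_int_egf F w z s) = (\<Sum>j. c j * z ^ j)"
    by (simp add: oint_iter_int_egf[OF F w] c_def mult.commute)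
  ultimately show ?thesis
    using DERIV_add[OF DERIV_const[of "w u"] powser_antiderivative[OF c]] by simp
qed

lemma oint_hyp0F1_1_primitive_diff:
  assumes F: "continuous_on UNIV F" and w: "continuous_on UNIV w"
  shows "oint 0 u (\<lambda>s. F s * w s * hyp0F1_1 (y * (primitive F u - primitive F s)))
           = oint 0 u (\<lambda>s. F s * iter_int_egf F w y s)"
proof -
  have "(y * d) ^ k / (fact k)\<^sup>2 = y ^ k / (fact k)\<^sup>2 * d ^ k" for d k
    by (simp add: power_mult_distrib)
  then have "hyp0F1_1 (y * d) = (\<Sum>k. y ^ k / (fact k)\<^sup>2 * d ^ k)" for d
    by (simp only: hyp0F1_1_def)
  then have "oint 0 u (\<lambda>s. F s * w s * hyp0F1_1 (y * (primitive F u - primitive F s)))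
               = (\<Sum>k. y ^ k / (fact k)\<^sup>2 * fact k * iter_int F w (Suc k) u)"
    by (simp only: oint_powser_primitive_diff[OF F w summable_hyp0F1_1_powser])
  also have "\<dots> = (\<Sum>k. y ^ k / fact k * iter_int F w (Suc k) u)"
    by (simp add: power2_eq_square)
  finally show ?thesis
    by (simp only: oint_iter_int_egf[OF F w])
qed

lemma oint_iter_int_egf_primitive:
  assumes F: "continuous_on UNIV F" and w: "continuous_on UNIV w" and G: "continuous_on UNIV G"
  shows "oint 0 v (\<lambda>t. c * G t * iter_int_egf F w (c * primitive G t) s)
           = (\<Sum>j. (c * primitive G v) ^ Suc j / fact (Suc j) * iter_int F w j s)"
proof -
  define a where "a j = iter_int F w j s / fact j" for j
  have egf: "iter_int_egf F w x s = (\<Sum>j. a j * x ^ j)" for x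
    by (simp add: iter_int_egf_def a_def mult_ac)
  have a: "summable (\<lambda>j. a j * x ^ j)" for x
    using summable_iter_int_egf[OF F w, of x s] by (simp add: a_def mult_ac)
  have "oint 0 v (\<lambda>t. c * G t * iter_int_egf F w (c * primitive G t) s)
          = oint 0 v (\<lambda>t. c * G t * (\<Sum>j. a j * (c * primitive G t) ^ j))"
    by (simp only: egf)
  also have "\<dots> = (\<Sum>j. a j / Suc j * (c * primitive G v) ^ Suc j)
                   - (\<Sum>j. a j / Suc j * (c * primitive G 0) ^ Suc j)"
    by (rule oint_substitution[OF powser_antiderivative[OF a]])
       (rule DERIV_cmult[OF has_real_derivative_primitive[OF G]])
  also have "\<dots> = (\<Sum>j. (c * primitive G v) ^ Suc j / fact (Suc j) * iter_int F w j s)"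
    by (simp add: a_def mult_ac)
  finally show ?thesis .
qed

section \<open>The time kernel\<close>

theorem TS_eq_iter_int_egf:
  assumes F: "continuous_on UNIV F" and G: "continuous_on UNIV G"
  shows "TS \<mu> hb F G u v = iter_int_egf F (\<lambda>s. s / 4) (\<mu> / (2 * hb^2) * primitive G v) u"
proof -
  define c where "c = \<mu> / (2 * hb^2)"
  define w :: "real \<Rightarrow> real" where "w s = s / 4" for s
  have w: "continuous_on UNIV w"
    unfolding w_def[abs_def] by (auto intro!: continuous_intros)
  define E D where "E z = iter_int_egf F w z u" and "D z = oint 0 u (\<lambda>s. F s * iter_int_egf F w z s)" for z
  define g where "g t = c * (primitive G v - primitive G t)" for t
  have inner: "oint 0 u (\<lambda>u'. F u' * (u' / 4) * hyp0F1_1 (c * Gt G v v' * Ft F u u')) = D (g v')" for v'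
    using oint_hyp0F1_1_primitive_diff[OF F w, of u "g v'"]
    by (simp add: Gt_def Ft_def oint_eq_primitive_diff F G D_def g_def w_def mult.assoc)
  have "oint 0 v (\<lambda>t. - c * G t * D (g t)) = E (g v) - E (g 0)"
    unfolding E_def D_def
    by (rule oint_substitution[OF iter_int_egf_has_real_derivative[OF F w]])
       (use G in \<open>auto simp: g_def intro!: derivative_eq_intros has_real_derivative_primitive\<close>)
  moreover have "oint 0 v (\<lambda>t. - c * G t * D (g t)) = - c * oint 0 v (\<lambda>t. G t * D (g t))"
    using oint_cmult[of 0 v "- c" "\<lambda>t. G t * D (g t)"] by (simp add: mult.assoc)
  ultimately have "c * oint 0 v (\<lambda>t. G t * D (g t)) = E (c * primitive G v) - u / 4"
    by (simp add: g_def E_def w_def)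
  then show ?thesis
    unfolding TS_def c_def[symmetric] inner by (simp add: E_def w_def[abs_def])
qed

lemma TS_integral_equation:
  assumes F: "continuous_on UNIV F" and G: "continuous_on UNIV G"
  shows "TS \<mu> hb F G u v = u / 4 + \<mu> / (2 * hb^2) *
           oint 0 u (\<lambda>u'. oint 0 v (\<lambda>v'. F u' * G v' * TS \<mu> hb F G u' v'))"
proof -
  define c where "c = \<mu> / (2 * hb^2)"
  have w: "continuous_on UNIV (\<lambda>s::real. s / 4)"
    by (auto intro!: continuous_intros)
  define z where "z = c * primitive G v"
  have TS: "TS \<mu> hb F G x y = iter_int_egf F (\<lambda>s. s / 4) (c * primitive G y) x" for x y
    unfolding TS_eq_iter_int_egf[OF F G] c_def ..
  have inner: "c * oint 0 v (\<lambda>v'. F u' * G v' * TS \<mu> hb F G u' v')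
                 = F u' * (\<Sum>j. z ^ Suc j / fact (Suc j) * iter_int F (\<lambda>s. s / 4) j u')" for u'
  proof -
    have "c * oint 0 v (\<lambda>v'. F u' * G v' * TS \<mu> hb F G u' v')
            = F u' * oint 0 v (\<lambda>t. c * G t * iter_int_egf F (\<lambda>s. s / 4) (c * primitive G t) u')"
      by (simp add: TS mult.assoc mult.left_commute flip: oint_cmult)
    then show ?thesis
      by (simp only: oint_iter_int_egf_primitive[OF F w G] z_def)
  qed
  have "c * oint 0 u (\<lambda>u'. oint 0 v (\<lambda>v'. F u' * G v' * TS \<mu> hb F G u' v'))
          = oint 0 u (\<lambda>u'. c * oint 0 v (\<lambda>v'. F u' * G v' * TS \<mu> hb F G u' v'))"
    by (simp only: oint_cmult)
  also have "\<dots> = oint 0 u (\<lambda>u'. F u' * (\<Sum>j. z ^ Suc j / fact (Suc j) * iter_int F (\<lambda>s. s / 4) j u'))"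
    by (simp only: inner)
  also have "\<dots> = (\<Sum>j. z ^ Suc j / fact (Suc j) * iter_int F (\<lambda>s. s / 4) (Suc j) u)"
    using summable_powser_shift[of "\<lambda>n. z ^ n / fact n", OF summable_exp_powser]
    by (rule oint_iter_int_series[OF F w])
  also have "\<dots> = TS \<mu> hb F G u v - u / 4"
    by (simp add: TS iter_int_egf_eq_head_tail[OF F w] z_def)
  finally show ?thesis by (simp add: c_def)
qed

lemma TS_has_real_derivative_v:
  assumes F: "continuous_on UNIV F" and G: "continuous_on UNIV G"
  shows "((\<lambda>v. TS \<mu> hb F G u v) has_real_derivative
           \<mu> / (2 * hb^2) * G v * oint 0 u (\<lambda>s. F s * TS \<mu> hb F G s v)) (at v)"
proof -
  define c where "c = \<mu> / (2 * hb^2)"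
  have w: "continuous_on UNIV (\<lambda>s::real. s / 4)"
    by (auto intro!: continuous_intros)
  have TS: "TS \<mu> hb F G x y = iter_int_egf F (\<lambda>s. s / 4) (c * primitive G y) x" for x y
    unfolding TS_eq_iter_int_egf[OF F G] c_def ..
  have "((\<lambda>v. iter_int_egf F (\<lambda>s. s / 4) (c * primitive G v) u) has_real_derivative
          oint 0 u (\<lambda>s. F s * iter_int_egf F (\<lambda>s. s / 4) (c * primitive G v) s) * (c * G v)) (at v)"
    by (rule DERIV_chain2[OF iter_int_egf_has_real_derivative[OF F w]
                              DERIV_cmult[OF has_real_derivative_primitive[OF G]]])
  then show ?thesis
    by (simp add: TS c_def mult_ac)
qed

lemma continuous_on_TS:
  assumes "continuous_on UNIV F" and "continuous_on UNIV G"
  shows "continuous_on UNIV (\<lambda>u. TS \<mu> hb F G u v)"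
  unfolding TS_eq_iter_int_egf[OF assms]
  using assms by (intro continuous_on_iter_int_egf) (auto intro!: continuous_intros)

theorem mainTheorem1:
  fixes \<mu> hb :: real and V F G :: "real \<Rightarrow> real"
  assumes "\<mu> > 0" and "hb > 0"
    and "continuous_on UNIV F" and "continuous_on UNIV G"
    and sep: "\<And>u v. V ((u + v) / 2) - V ((u - v) / 2) = F u * G v"
  shows "(\<forall>u v. TS \<mu> hb F G u v =
            u / 4 + \<mu> / (2 * hb^2) *
              oint 0 u (\<lambda>u'. oint 0 v (\<lambda>v'. F u' * G v' * TS \<mu> hb F G u' v')))
       \<and> (\<exists>Tv :: real \<Rightarrow> real \<Rightarrow> real.
            (\<forall>u v. ((\<lambda>v. TS \<mu> hb F G u v) has_real_derivative Tv u v) (at v))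
          \<and> (\<forall>u v. \<exists>D. ((\<lambda>u. Tv u v) has_real_derivative D) (at u)
                 \<and> - (2 * hb^2 / \<mu>) * D
                   + (V ((u + v) / 2) - V ((u - v) / 2)) * TS \<mu> hb F G u v = 0))
       \<and> (\<forall>u. TS \<mu> hb F G u 0 = u / 4)
       \<and> (\<forall>v. TS \<mu> hb F G 0 v = 0)"
proof -
  note F = assms(3) and G = assms(4)
  define c where "c = \<mu> / (2 * hb^2)"
  define Tv where "Tv u v = c * G v * primitive (\<lambda>s. F s * TS \<mu> hb F G s v) u" for u v
  have Tv_u: "((\<lambda>u. Tv u v) has_real_derivative c * G v * (F u * TS \<mu> hb F G u v)) (at u)" for u v
    unfolding Tv_def using F G
    by (intro DERIV_cmult has_real_derivative_primitive continuous_intros continuous_on_TS)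
  have kernel_equation: "- (2 * hb^2 / \<mu>) * (c * G v * (F u * TS \<mu> hb F G u v))
          + (V ((u + v) / 2) - V ((u - v) / 2)) * TS \<mu> hb F G u v = 0" for u v
    using assms(1,2) by (simp add: sep c_def field_simps)
  show ?thesis
  proof (intro conjI allI exI[of _ Tv])
    show "TS \<mu> hb F G u v = u / 4 + \<mu> / (2 * hb^2) *
            oint 0 u (\<lambda>u'. oint 0 v (\<lambda>v'. F u' * G v' * TS \<mu> hb F G u' v'))" for u v
      by (rule TS_integral_equation[OF F G])
    show "((\<lambda>v. TS \<mu> hb F G u v) has_real_derivative Tv u v) (at v)" for u v
      using TS_has_real_derivative_v[OF F G] by (simp add: Tv_def primitive_def c_def)
    show "\<exists>D. ((\<lambda>u. Tv u v) has_real_derivative D) (at u)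
            \<and> - (2 * hb^2 / \<mu>) * D + (V ((u + v) / 2) - V ((u - v) / 2)) * TS \<mu> hb F G u v = 0" for u v
      using Tv_u kernel_equation by blast
    show "TS \<mu> hb F G u 0 = u / 4" for u
      by (simp add: TS_def)
    show "TS \<mu> hb F G 0 v = 0" for v
      by (simp add: TS_def oint_def)
  qed
qed

end
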